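(* For $p\in(0,\infty)$ and $w\in\mathbb{R}$ let $f_p(w)=\int_0^{\infty}x^{p-1}e^{-x^2}\sin(wx)\,\mathrm{d}x$. Suppose $p\in(0,2)$. Then there exists a constant $c_p\neq0$ such that for all $w\in\mathbb{R}$ $$f_p(w)=c_p\ \mathrm{p.v.}\!\int_{\mathbb{R}}\mathsf{sign}(t)|t|^{-p}e^{-(w-t)^2/4}\,\mathrm{d}t .$$ As a consequence, whenever $p\in(0,2]$, $f_p(w)=0$ only for $w=0$.
   Context: $\mathrm{p.v.}$ denotes the Cauchy principal value at $t=0$: $\lim_{\epsilon\downarrow0}\int_{|t|>\epsilon}$. *)

theory Defs
  imports "HOL-Analysis.Analysis"
begin

definition fp :: "real \<Rightarrow> real \<Rightarrow> real" where
  "fp p w = integral {0<..} (\<lambda>x. x powr (p - 1) * exp (- (x\<^sup>2)) * sin (w * x))"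

definition has_pv_integral :: "(real \<Rightarrow> real) \<Rightarrow> real \<Rightarrow> bool" where
  "has_pv_integral g L \<longleftrightarrow>
     (\<forall>\<epsilon>>0. g integrable_on {t. \<epsilon> < \<bar>t\<bar>}) \<and>
     ((\<lambda>\<epsilon>. integral {t. \<epsilon> < \<bar>t\<bar>} g) \<longlongrightarrow> L) (at_right 0)"

end

theory Submission
  imports Defs "HOL-Probability.Probability" "HOL-Real_Asymp.Real_Asymp"
begin

(* With D_w(t) = exp(-(w-t)^2/4) - exp(-(w+t)^2/4), folding t to -t turns the principal value into
   L_p(w) = int_0^oo t^(-p) D_w(t) dt, absolutely convergent for 0 < p < 2 because |D_w(t)| <= |t|.
   Substitute Gamma(p) t^(-p) = int_0^oo s^(p-1) e^(-st) ds and
   D_w(t) = (4/sqrt pi) int_0^oo e^(-x^2) sin(wx) sin(tx) dx. The t-integral is then the Laplace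
   transform x/(s^2+x^2) of sin(xt), and the s-integral gives K_p x^(p-1) with
   K_p = int_0^oo u^(p-1)/(1+u^2) du > 0; two uses of Fubini yield
   sqrt pi Gamma(p) L_p(w) / 4 = K_p f_p(w). Since D_w(t) has the sign of w for t > 0, L_p(w) vanishes
   only at w = 0; for p = 2 integration by parts gives f_2(w) = sqrt pi w e^(-w^2/4) / 4. *)

lemma lborel_integral_has_integral_nonneg:
  fixes f :: "real \<Rightarrow> real"
  assumes [measurable]: "f \<in> borel_measurable borel" "A \<in> sets borel"
    and I: "(f has_integral I) A" and nonneg: "\<And>x. x \<in> A \<Longrightarrow> 0 \<le> f x"
  shows "integrable lborel (\<lambda>x. indicator A x * f x)"
    and "(\<integral>x. indicator A x * f x \<partial>lborel) = I"
proof -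
  have "f absolutely_integrable_on A"
    using I nonneg by (intro nonnegative_absolutely_integrable_1) (auto simp: integrable_on_def)
  then have "set_integrable lborel A f"
    unfolding set_integrable_def using integrable_completion[of "\<lambda>x. indicator A x *\<^sub>R f x" lborel]
    by (simp add: set_integrable_def)
  then show "integrable lborel (\<lambda>x. indicator A x * f x)"
    by (simp add: set_integrable_def)
  from set_borel_integral_eq_integral(2)[OF \<open>set_integrable lborel A f\<close>] I
  show "(\<integral>x. indicator A x * f x \<partial>lborel) = I"
    by (simp add: set_lebesgue_integral_def integral_unique)
qed

lemma integrable_exp_neg_linear:
  "s > 0 \<Longrightarrow> integrable lborel (\<lambda>x::real. indicator {0..} x * exp (- (s * x)))"
  using lborel_integral_has_integral_nonneg(1)[OF _ _ has_integral_exp_minus_to_infinity]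
  by simp

lemma integrable_Ioi_0_powr_bound:
  fixes f g :: "real \<Rightarrow> real"
  assumes [measurable]: "f \<in> borel_measurable borel"
    and a: "a > -1" and g: "integrable lborel (\<lambda>x. indicator {1..} x * g x)"
    and near_0: "\<And>x. 0 < x \<Longrightarrow> x < 1 \<Longrightarrow> \<bar>f x\<bar> \<le> x powr a"
    and near_inf: "\<And>x. 1 \<le> x \<Longrightarrow> \<bar>f x\<bar> \<le> g x"
  shows "integrable lborel (\<lambda>x. indicator {0<..} x * f x)"
proof (rule Bochner_Integration.integrable_bound)
  have "integrable lborel (\<lambda>x::real. indicator {0..1} x * x powr a)"
    by (rule lborel_integral_has_integral_nonneg(1)[OF _ _ has_integral_powr_from_0]) (use a in auto)
  with g show "integrable lborel (\<lambda>x. indicator {0..1} x * x powr a + indicator {1..} x * g x)"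
    by simp
  show "AE x in lborel. norm (indicator {0<..} x * f x)
      \<le> norm (indicator {0..1} x * x powr a + indicator {1..} x * g x)"
  proof (intro always_eventually allI)
    fix x :: real
    consider "x \<le> 0" | "0 < x" "x < 1" | "1 \<le> x" by linarith
    then show "norm (indicator {0<..} x * f x) \<le> norm (indicator {0..1} x * x powr a + indicator {1..} x * g x)"
    proof cases
      case 3
      with near_inf[of x] show ?thesis by (cases "x = 1") (auto simp: indicator_def)
    qed (use near_0[of x] in \<open>auto simp: indicator_def\<close>)
  qed
qed measurable

lemma integral_lborel_fold:
  fixes F :: "real \<Rightarrow> real"
  assumes F: "integrable lborel F"
  shows "(\<integral>t. F t \<partial>lborel) = (\<integral>t. indicator {0<..} t * (F t + F (- t)) \<partial>lborel)"
proof -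
  have [measurable]: "F \<in> borel_measurable borel" using F by auto
  have pos: "integrable lborel (\<lambda>x. indicator {0<..} x * F x)"
    using integrable_mult_indicator[OF _ F, of "{0<..}"] by simp
  have neg: "integrable lborel (\<lambda>x. indicator {..0} x * F x)"
    using integrable_mult_indicator[OF _ F, of "{..0}"] by simp
  have reflected: "integrable lborel (\<lambda>x. indicator {0<..} x * F (- x))"
    using integrable_mult_indicator[OF _ lborel_integrable_real_affine[OF F, of "-1" 0], of "{0<..}"]
    by simp
  have "(\<integral>x. F x \<partial>lborel) = (\<integral>x. indicator {0<..} x * F x + indicator {..0} x * F x \<partial>lborel)"
    by (rule Bochner_Integration.integral_cong) (auto simp: indicator_def)
  also have "\<dots> = (\<integral>x. indicator {0<..} x * F x \<partial>lborel) + (\<integral>x. indicator {..0} x * F x \<partial>lborel)"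
    using pos neg by simp
  also have "(\<integral>x. indicator {..0} x * F x \<partial>lborel)
      = \<bar>-1\<bar> *\<^sub>R (\<integral>x. indicator {..0} (0 + (-1) * x) * F (0 + (-1) * x) \<partial>lborel)"
    by (rule lborel_integral_real_affine) simp
  also have "\<dots> = (\<integral>x. indicator {0<..} x * F (- x) \<partial>lborel)"
    by (simp, rule integral_cong_AE)
       (auto intro!: eventually_mono[OF AE_lborel_singleton[of 0]] simp: indicator_def)
  finally show ?thesis
    using pos reflected by (simp add: distrib_left)
qed

lemma integral_Ioi_0_even:
  fixes h :: "real \<Rightarrow> real"
  assumes "integrable lborel h" and "\<And>x. h (- x) = h x"
  shows "(\<integral>x. indicator {0<..} x * h x \<partial>lborel) = (\<integral>x. h x \<partial>lborel) / 2"
proof -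
  have "(\<integral>x. h x \<partial>lborel) = (\<integral>x. 2 * (indicator {0<..} x * h x) \<partial>lborel)"
    unfolding integral_lborel_fold[OF assms(1)] assms(2) by (simp add: algebra_simps)
  then show ?thesis by simp
qed

lemma integral_Ioi_FTC:
  fixes f F :: "real \<Rightarrow> real"
  assumes [measurable]: "f \<in> borel_measurable borel"
    and der: "\<And>x. (F has_real_derivative f x) (at x)"
    and int: "integrable lborel (\<lambda>x. indicator {a<..} x * f x)"
    and lim: "(F \<longlongrightarrow> B) at_top"
  shows "(\<integral>x. indicator {a<..} x * f x \<partial>lborel) = B - F a"
proof -
  have Ioi_Ici: "AE x in lborel. indicator {a<..} x * f x = indicator {a..} x * f x"
    by (rule eventually_mono[OF AE_lborel_singleton[of a]]) (auto simp: indicator_def)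
  have int': "set_integrable lborel {a..} f"
    unfolding set_integrable_def real_scaleR_def
    by (rule integrable_cong_AE_imp[OF int _ Ioi_Ici]) measurable
  have "\<forall>\<^sub>F b in at_top. set_lebesgue_integral lborel {a..b} f = F b - F a"
  proof (rule eventually_mono[OF eventually_ge_at_top[of a]])
    fix b assume "a \<le> b"
    then have "(f has_integral (F b - F a)) {a..b}"
      using der
      by (intro fundamental_theorem_of_calculus)
         (auto simp flip: has_real_derivative_iff_has_vector_derivative intro: has_field_derivative_at_within)
    moreover have "set_integrable lborel {a..b} f"
      by (rule set_integrable_subset[OF int']) auto
    ultimately show "set_lebesgue_integral lborel {a..b} f = F b - F a"
      by (simp add: set_borel_integral_eq_integral(2) integral_unique)
  qed
  with tendsto_set_lebesgue_integral_at_top[OF _ int']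
  have "((\<lambda>b. F b - F a) \<longlongrightarrow> set_lebesgue_integral lborel {a..} f) at_top"
    by (rule Lim_transform_eventually) simp
  moreover have "((\<lambda>b. F b - F a) \<longlongrightarrow> B - F a) at_top"
    by (intro tendsto_intros lim)
  ultimately have "set_lebesgue_integral lborel {a..} f = B - F a"
    by (rule tendsto_unique[OF trivial_limit_at_top_linorder])
  moreover have "(\<integral>x. indicator {a<..} x * f x \<partial>lborel) = set_lebesgue_integral lborel {a..} f"
    unfolding set_lebesgue_integral_def using Ioi_Ici by (auto intro!: integral_cong_AE)
  ultimately show ?thesis by simp
qed

lemma integral_Ioi_pos:
  fixes h :: "real \<Rightarrow> real"
  assumes int: "integrable lborel (\<lambda>x. indicator {a<..} x * h x)"
    and pos: "\<And>x. a < x \<Longrightarrow> 0 < h x"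
  shows "0 < (\<integral>x. indicator {a<..} x * h x \<partial>lborel)"
proof -
  have nonneg: "AE x in lborel. 0 \<le> indicator {a<..} x * h x"
    using pos by (auto simp: indicator_def less_imp_le)
  have "(\<integral>x. indicator {a<..} x * h x \<partial>lborel) \<noteq> 0"
  proof
    assume "(\<integral>x. indicator {a<..} x * h x \<partial>lborel) = 0"
    then have "AE x in lborel. indicator {a<..} x * h x = 0"
      using integral_nonneg_eq_0_iff_AE[OF int nonneg] by simp
    then have "AE x in lborel. x \<le> a"
    proof (rule eventually_mono)
      show "indicator {a<..} x * h x = 0 \<Longrightarrow> x \<le> a" for x
        using pos[of x] by (cases "a < x") auto
    qed
    then have "{x \<in> space lborel. \<not> x \<le> a} \<in> null_sets lborel"
      by (subst (asm) AE_iff_null) auto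
    then have "{a<..a + 1} \<in> null_sets lborel"
      by (rule null_sets_subset) auto
    then have "emeasure lborel {a<..a + 1} = 0" by auto
    then show False by simp
  qed
  with integral_nonneg_AE[OF nonneg] show ?thesis by simp
qed

lemma integral_Ioi_0_scale:
  fixes f :: "real \<Rightarrow> real"
  assumes c: "c > 0" and f: "integrable lborel (\<lambda>u. indicator {0<..} u * f u)"
  shows "integrable lborel (\<lambda>s. indicator {0<..} s * f (c * s))"
    and "(\<integral>s. indicator {0<..} s * f (c * s) \<partial>lborel) = (\<integral>u. indicator {0<..} u * f u \<partial>lborel) / c"
proof -
  have ind: "indicator {0<..} (c * s) = (indicator {0<..} s :: real)" for s
    using c by (simp add: indicator_def zero_less_mult_iff)
  show "integrable lborel (\<lambda>s. indicator {0<..} s * f (c * s))"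
    using lborel_integrable_real_affine[OF f, of c 0] c by (simp add: ind)
  have "(\<integral>u. indicator {0<..} u * f u \<partial>lborel)
      = \<bar>c\<bar> *\<^sub>R (\<integral>s. indicator {0<..} (0 + c * s) * f (0 + c * s) \<partial>lborel)"
    by (rule lborel_integral_real_affine) (use c in simp)
  then show "(\<integral>s. indicator {0<..} s * f (c * s) \<partial>lborel) = (\<integral>u. indicator {0<..} u * f u \<partial>lborel) / c"
    using c by (simp add: ind)
qed

lemma tendsto_integral_Ioi_at_right_0:
  fixes H :: "real \<Rightarrow> real"
  assumes H: "integrable lborel (\<lambda>t. indicator {0<..} t * H t)"
  shows "((\<lambda>e. \<integral>t. indicator {e<..} t * H t \<partial>lborel) \<longlongrightarrow> (\<integral>t. indicator {0<..} t * H t \<partial>lborel))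
           (at_right 0)"
proof -
  define G where "G = (\<lambda>t. indicator {0<..} t * H t)"
  have [measurable]: "G \<in> borel_measurable lborel"
    unfolding G_def using H by (rule borel_measurable_integrable)
  have "((\<lambda>T. \<integral>t. indicator {inverse T<..} t * G t \<partial>lborel) \<longlongrightarrow> (\<integral>t. G t \<partial>lborel)) at_top"
  proof (rule integral_dominated_convergence_at_top[where w = "\<lambda>t. \<bar>G t\<bar>"])
    show "AE t in lborel. ((\<lambda>T. indicator {inverse T<..} t * G t) \<longlongrightarrow> G t) at_top"
    proof (intro always_eventually allI)
      fix t :: real
      show "((\<lambda>T. indicator {inverse T<..} t * G t) \<longlongrightarrow> G t) at_top"
      proof (cases "t > 0")
        case True
        have "\<forall>\<^sub>F T in at_top. indicator {inverse T<..} t * G t = G t"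
        proof (rule eventually_mono[OF eventually_gt_at_top[of "inverse t"]])
          fix T assume "inverse t < T"
          then have "inverse T < t"
            using True by (metis inverse_inverse_eq inverse_less_iff_less inverse_positive_iff_positive order_less_trans)
          then show "indicator {inverse T<..} t * G t = G t" by simp
        qed
        then show ?thesis by (rule tendsto_eventually)
      qed (simp add: G_def)
    qed
    show "integrable lborel (\<lambda>t. \<bar>G t\<bar>)"
      unfolding G_def using H by (rule integrable_abs)
    show "\<forall>\<^sub>F T in at_top. AE t in lborel. norm (indicator {inverse T<..} t * G t) \<le> \<bar>G t\<bar>"
      by (intro always_eventually allI) (simp add: indicator_def)
  qed measurable
  then have "((\<lambda>e. \<integral>t. indicator {e<..} t * G t \<partial>lborel) \<longlongrightarrow> (\<integral>t. G t \<partial>lborel)) (at_right 0)"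
    unfolding at_right_to_top filterlim_filtermap .
  moreover have "\<forall>\<^sub>F e in at_right 0. (\<integral>t. indicator {e<..} t * G t \<partial>lborel) = (\<integral>t. indicator {e<..} t * H t \<partial>lborel)"
    by (rule eventually_mono[OF eventually_at_right_less])
       (auto intro!: Bochner_Integration.integral_cong simp: G_def indicator_def)
  ultimately show ?thesis
    unfolding G_def by (rule Lim_transform_eventually)
qed

lemma integral_swap_nonneg_kernel:
  fixes a :: "real \<Rightarrow> real" and k :: "real \<Rightarrow> real \<Rightarrow> real"
  assumes [measurable]: "(\<lambda>(x, y). a x * k x y) \<in> borel_measurable (lborel \<Otimes>\<^sub>M lborel)"
    and k_int: "\<And>x. integrable lborel (k x)" and k_nonneg: "\<And>x y. 0 \<le> k x y"
    and outer: "integrable lborel (\<lambda>x. a x * (\<integral>y. k x y \<partial>lborel))"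
  shows "(\<integral>x. a x * (\<integral>y. k x y \<partial>lborel) \<partial>lborel) = (\<integral>y. (\<integral>x. a x * k x y \<partial>lborel) \<partial>lborel)"
proof -
  have abs_inner: "(\<integral>y. \<bar>a x * k x y\<bar> \<partial>lborel) = \<bar>a x * (\<integral>y. k x y \<partial>lborel)\<bar>" for x
    using k_nonneg by (simp add: abs_mult)
  have "integrable (lborel \<Otimes>\<^sub>M lborel) (\<lambda>(x, y). a x * k x y)"
    by (rule lborel_pair.Fubini_integrable) (use integrable_abs[OF outer] k_int in \<open>auto simp: abs_inner\<close>)
  from lborel_pair.Fubini_integral[OF this] show ?thesis by simp
qed

lemma integral_swap_product_bound:
  fixes f :: "real \<Rightarrow> real \<Rightarrow> real"
  assumes [measurable]: "(\<lambda>(x, y). f x y) \<in> borel_measurable (lborel \<Otimes>\<^sub>M lborel)"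
    and g: "integrable lborel g" and h: "integrable lborel h"
    and bound: "\<And>x y. \<bar>f x y\<bar> \<le> g x * h y"
  shows "(\<integral>x. (\<integral>y. f x y \<partial>lborel) \<partial>lborel) = (\<integral>y. (\<integral>x. f x y \<partial>lborel) \<partial>lborel)"
proof -
  have [measurable]: "g \<in> borel_measurable borel" "h \<in> borel_measurable borel"
    using g h by auto
  have "integrable (lborel \<Otimes>\<^sub>M lborel) (\<lambda>(x, y). g x * h y)"
    by (rule lborel_pair.Fubini_integrable) (use g h in \<open>auto simp: abs_mult\<close>)
  then have "integrable (lborel \<Otimes>\<^sub>M lborel) (\<lambda>(x, y). f x y)"
    by (rule Bochner_Integration.integrable_bound)
       (auto simp: split_beta intro!: always_eventually order_trans[OF bound abs_ge_self])
  from lborel_pair.Fubini_integral[OF this] show ?thesis by simp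
qed

lemma integrable_lborel_gaussian: "integrable lborel (\<lambda>x::real. exp (- x\<^sup>2))"
proof -
  have "has_bochner_integral lborel (\<lambda>x::real. exp (- x\<^sup>2)) (2 *\<^sub>R (sqrt pi / 2))"
    by (rule has_bochner_integral_even_function[OF gaussian_moment_0]) simp
  then show ?thesis by (rule integrable.intros)
qed

lemma integrable_gaussian_shift: "integrable lborel (\<lambda>t::real. exp (- ((w - t)\<^sup>2) / 4))"
proof -
  have "integrable lborel (\<lambda>t::real. exp (- (w / 2 + (-1 / 2) * t)\<^sup>2))"
    by (rule lborel_integrable_real_affine[OF integrable_lborel_gaussian]) simp
  moreover have "(\<lambda>t::real. exp (- (w / 2 + (-1 / 2) * t)\<^sup>2)) = (\<lambda>t. exp (- ((w - t)\<^sup>2) / 4))"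
    by (rule ext) (simp add: power2_eq_square field_simps)
  ultimately show ?thesis by simp
qed

lemma integrable_gaussian_cos: "integrable lborel (\<lambda>x::real. exp (- x\<^sup>2) * cos (u * x))"
  by (rule Bochner_Integration.integrable_bound[OF integrable_lborel_gaussian]) (auto simp: abs_mult)

lemma integral_gaussian_cos:
  "(\<integral>x. exp (- x\<^sup>2) * cos (u * x) \<partial>lborel) = sqrt pi * exp (- (u\<^sup>2) / 4)"
proof -
  define t where "t = u / sqrt 2"
  have char_normal: "(\<integral>x. std_normal_density x * cos (t * x) \<partial>lborel) = exp (- (t\<^sup>2) / 2)"
  proof -
    interpret real_distribution std_normal_distribution by (rule real_dist_normal_dist)
    have int: "integrable std_normal_distribution (\<lambda>x. iexp (t * x))"
      by (rule integrable_const_bound[where B=1]) (auto simp: norm_exp_i_times)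
    have "Re (char std_normal_distribution t) = (\<integral>x. cos (t * x) \<partial>std_normal_distribution)"
      unfolding char_def using integral_Re[OF int, symmetric] by (simp add: Re_exp)
    also have "\<dots> = (\<integral>x. std_normal_density x * cos (t * x) \<partial>lborel)"
      by (subst integral_density) (auto simp: normal_density_nonneg)
    finally show ?thesis
      using char_std_normal_distribution by (metis Re_complex_of_real)
  qed
  have "exp (- (u\<^sup>2) / 4) = exp (- (t\<^sup>2) / 2)"
    by (simp add: t_def power_divide)
  also have "\<dots> = (\<integral>x. std_normal_density x * cos (t * x) \<partial>lborel)"
    by (rule char_normal[symmetric])
  also have "\<dots> = sqrt 2 * (\<integral>y. std_normal_density (sqrt 2 * y) * cos (t * (sqrt 2 * y)) \<partial>lborel)"
    using lborel_integral_real_affine[of "sqrt 2" "\<lambda>x. std_normal_density x * cos (t * x)" 0] by simp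
  also have "\<dots> = (\<integral>y. exp (- y\<^sup>2) * cos (u * y) \<partial>lborel) / sqrt pi"
    by (simp add: std_normal_density_def t_def power_mult_distrib real_sqrt_mult)
  finally show ?thesis by (simp add: field_simps)
qed

definition gauss_diff :: "real \<Rightarrow> real \<Rightarrow> real" where
  "gauss_diff w t = exp (- ((w - t)\<^sup>2) / 4) - exp (- ((w + t)\<^sup>2) / 4)"

lemma gauss_diff_measurable [measurable]: "gauss_diff w \<in> borel_measurable borel"
  unfolding gauss_diff_def by measurable

lemma integral_Ioi_0_gaussian_sin_sin:
  "(\<integral>x. indicator {0<..} x * (exp (- x\<^sup>2) * sin (w * x) * sin (t * x)) \<partial>lborel)
     = sqrt pi / 4 * gauss_diff w t"
proof -
  define h where "h = (\<lambda>x. (exp (- x\<^sup>2) * cos ((w - t) * x) - exp (- x\<^sup>2) * cos ((w + t) * x)) / 2)"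
  have h_eq: "exp (- x\<^sup>2) * sin (w * x) * sin (t * x) = h x" for x
    by (simp add: h_def left_diff_distrib distrib_right cos_diff cos_add algebra_simps)
  have "integrable lborel h"
    unfolding h_def by (intro integrable_divide Bochner_Integration.integrable_diff integrable_gaussian_cos)
  moreover have "(\<integral>x. h x \<partial>lborel) = sqrt pi / 2 * gauss_diff w t"
  proof -
    have "(\<integral>x. h x \<partial>lborel)
        = ((\<integral>x. exp (- x\<^sup>2) * cos ((w - t) * x) \<partial>lborel) - (\<integral>x. exp (- x\<^sup>2) * cos ((w + t) * x) \<partial>lborel)) / 2"
      unfolding h_def by (simp add: integrable_gaussian_cos)
    then show ?thesis
      by (simp only: integral_gaussian_cos) (simp add: gauss_diff_def field_simps)
  qed
  ultimately show ?thesis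
    unfolding h_eq by (subst integral_Ioi_0_even) (auto simp: h_def)
qed

lemma abs_exp_neg_sq_quarter_diff_le:
  fixes a b :: real
  shows "\<bar>exp (- (a\<^sup>2) / 4) - exp (- (b\<^sup>2) / 4)\<bar> \<le> \<bar>a - b\<bar> / 2"
proof -
  have der: "((\<lambda>u. exp (- (u\<^sup>2) / 4)) has_real_derivative - (z / 2) * exp (- (z\<^sup>2) / 4)) (at z)" for z :: real
    by (auto intro!: derivative_eq_intros simp: field_simps)
  have slope: "\<bar>z / 2 * exp (- (z\<^sup>2) / 4)\<bar> \<le> 1 / 2" for z :: real
  proof -
    have "\<bar>z\<bar> \<le> 1 + z\<^sup>2 / 4"
      using sum_power2_ge_zero[of "\<bar>z\<bar> - 2" 0] by (simp add: power2_eq_square algebra_simps)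
    also have "\<dots> \<le> exp (z\<^sup>2 / 4)" by (rule exp_ge_add_one_self)
    finally show ?thesis by (simp add: abs_mult exp_minus field_simps)
  qed
  have "\<bar>exp (- (y\<^sup>2) / 4) - exp (- (x\<^sup>2) / 4)\<bar> \<le> (y - x) / 2" if xy: "x < y" for x y :: real
  proof -
    obtain z where "exp (- (y\<^sup>2) / 4) - exp (- (x\<^sup>2) / 4) = (y - x) * (- (z / 2) * exp (- (z\<^sup>2) / 4))"
      using MVT2[of x y "\<lambda>u. exp (- (u\<^sup>2) / 4)" "\<lambda>z. - (z / 2) * exp (- (z\<^sup>2) / 4)"] xy der
      by blast
    then have "\<bar>exp (- (y\<^sup>2) / 4) - exp (- (x\<^sup>2) / 4)\<bar> = (y - x) * \<bar>z / 2 * exp (- (z\<^sup>2) / 4)\<bar>"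
      using xy by (simp add: abs_mult)
    also have "\<dots> \<le> (y - x) * (1 / 2)"
      using xy slope[of z] by (intro mult_left_mono) auto
    finally show ?thesis by simp
  qed
  from this[of a b] this[of b a] show ?thesis
    by (cases a b rule: linorder_cases) (auto simp: abs_minus_commute)
qed

lemma abs_gauss_diff_le: "\<bar>gauss_diff w t\<bar> \<le> \<bar>t\<bar>"
  using abs_exp_neg_sq_quarter_diff_le[of "w - t" "w + t"] by (simp add: gauss_diff_def abs_mult)

lemma abs_gauss_diff_le_sum: "\<bar>gauss_diff w t\<bar> \<le> exp (- ((w - t)\<^sup>2) / 4) + exp (- ((w + t)\<^sup>2) / 4)"
  unfolding gauss_diff_def by (rule order_trans[OF abs_triangle_ineq4]) simp

lemma gauss_diff_pos: "0 < w \<Longrightarrow> 0 < t \<Longrightarrow> 0 < gauss_diff w t"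
  unfolding gauss_diff_def using mult_pos_pos[of w t] by (simp add: power2_eq_square field_simps)

lemma gauss_diff_minus: "gauss_diff (- w) t = - gauss_diff w t"
  unfolding gauss_diff_def by (simp add: power2_eq_square algebra_simps)

lemma integral_Ioi_0_exp_sin:
  fixes s x :: real
  assumes s: "s > 0"
  shows "(\<integral>t. indicator {0<..} t * (exp (- (s * t)) * sin (x * t)) \<partial>lborel) = x / (s\<^sup>2 + x\<^sup>2)"
proof -
  define c where "c = s\<^sup>2 + x\<^sup>2"
  have c: "c > 0" unfolding c_def using s by (simp add: add_pos_nonneg)
  define G where "G t = exp (- (s * t)) * (s * sin (x * t) + x * cos (x * t))" for t
  have "(G has_real_derivative - c * (exp (- (s * t)) * sin (x * t))) (at t)" for t
    unfolding G_def c_def by (auto intro!: derivative_eq_intros simp: algebra_simps power2_eq_square)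
  then have "((\<lambda>t. - (G t / c)) has_real_derivative exp (- (s * t)) * sin (x * t)) (at t)" for t
    using c by (auto intro!: derivative_eq_intros)
  moreover have "integrable lborel (\<lambda>t. indicator {0<..} t * (exp (- (s * t)) * sin (x * t)))"
    by (rule Bochner_Integration.integrable_bound[OF integrable_exp_neg_linear[OF s]])
       (auto simp: indicator_def abs_mult intro!: mult_left_le)
  moreover have "((\<lambda>t. - (G t / c)) \<longlongrightarrow> 0) at_top"
  proof (rule Lim_null_comparison)
    have "\<bar>s * sin (x * t) + x * cos (x * t)\<bar> \<le> \<bar>s\<bar> + \<bar>x\<bar>" for t
      by (rule order_trans[OF abs_triangle_ineq]) (auto simp: abs_mult intro!: add_mono mult_left_le)
    then show "\<forall>\<^sub>F t in at_top. norm (- (G t / c)) \<le> exp (- (s * t)) * (\<bar>s\<bar> + \<bar>x\<bar>) / c"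
      unfolding G_def using c by (auto simp: abs_mult divide_right_mono)
    show "((\<lambda>t. exp (- (s * t)) * (\<bar>s\<bar> + \<bar>x\<bar>) / c) \<longlongrightarrow> 0) at_top"
      by (intro tendsto_divide_zero tendsto_mult_left_zero) (use s in real_asymp)
  qed
  ultimately have "(\<integral>t. indicator {0<..} t * (exp (- (s * t)) * sin (x * t)) \<partial>lborel) = 0 - - (G 0 / c)"
    by (intro integral_Ioi_FTC) auto
  then show ?thesis by (simp add: G_def c_def)
qed

lemma integral_Ioi_0_Gamma_scaled:
  fixes p t :: real
  assumes p: "p > 0" and t: "t > 0"
  shows "integrable lborel (\<lambda>s. indicator {0<..} s * (s powr (p - 1) * exp (- (s * t))))"
    and "(\<integral>s. indicator {0<..} s * (s powr (p - 1) * exp (- (s * t))) \<partial>lborel) = Gamma p * t powr (- p)"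
proof -
  define f where "f u = u powr (p - 1) / exp u" for u :: real
  have "(f has_integral Gamma p) {0<..}"
    unfolding f_def
    by (rule has_integral_spike_set_eq[THEN iffD1, rotated 2, OF Gamma_integral_real[OF p]])
       (auto intro: negligible_subset[of "{0}"])
  moreover have "f \<in> borel_measurable borel"
    unfolding f_def by measurable
  ultimately have f_int: "integrable lborel (\<lambda>u. indicator {0<..} u * f u)"
    and f_val: "(\<integral>u. indicator {0<..} u * f u \<partial>lborel) = Gamma p"
    using lborel_integral_has_integral_nonneg[of f "{0<..}"] by (auto simp: f_def)
  have scaled: "indicator {0<..} s * f (t * s) = t powr (p - 1) * (indicator {0<..} s * (s powr (p - 1) * exp (- (s * t))))" for s
    using t by (auto simp: f_def indicator_def powr_mult exp_minus field_simps)
  show "integrable lborel (\<lambda>s. indicator {0<..} s * (s powr (p - 1) * exp (- (s * t))))"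
    using integral_Ioi_0_scale(1)[OF t f_int] t by (simp add: scaled)
  define I where "I = (\<integral>s. indicator {0<..} s * (s powr (p - 1) * exp (- (s * t))) \<partial>lborel)"
  have "(\<integral>s. indicator {0<..} s * f (t * s) \<partial>lborel) = Gamma p / t"
    using integral_Ioi_0_scale(2)[OF t f_int] by (simp only: f_val)
  then have "t powr (p - 1) * I = Gamma p / t"
    unfolding scaled I_def by simp
  then show "I = Gamma p * t powr (- p)"
    using t by (simp add: powr_diff powr_minus field_simps)
qed

(* K_p = pi / (2 sin (pi p / 2)), but only its positivity is needed. *)
definition lorentz_mellin :: "real \<Rightarrow> real" where
  "lorentz_mellin p = (\<integral>u. indicator {0<..} u * (u powr (p - 1) / (u\<^sup>2 + 1)) \<partial>lborel)"

lemma integrable_lorentz_mellin: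
  fixes p :: real
  assumes p: "0 < p" "p < 2"
  shows "integrable lborel (\<lambda>u. indicator {0<..} u * (u powr (p - 1) / (u\<^sup>2 + 1)))"
proof (rule integrable_Ioi_0_powr_bound)
  show "integrable lborel (\<lambda>u::real. indicator {1..} u * u powr (p - 3))"
    by (rule lborel_integral_has_integral_nonneg(1)[OF _ _ has_integral_powr_to_inf]) (use p in auto)
  show "\<bar>u powr (p - 1) / (u\<^sup>2 + 1)\<bar> \<le> u powr (p - 1)" if "0 < u" for u :: real
    using that by (simp add: divide_le_eq add_nonneg_pos mult_le_cancel_left1 less_imp_le)
  show "\<bar>u powr (p - 1) / (u\<^sup>2 + 1)\<bar> \<le> u powr (p - 3)" if "1 \<le> u" for u :: real
  proof -
    have "u powr (p - 1) / (u\<^sup>2 + 1) \<le> u powr (p - 1) / u\<^sup>2"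
      using that by (intro divide_left_mono) (auto intro!: mult_pos_pos add_nonneg_pos)
    also have "\<dots> = u powr (p - 3)"
      using that by (simp add: powr_diff[symmetric] powr_numeral[symmetric] del: powr_numeral)
    finally show ?thesis by simp
  qed
qed (use p in auto)

lemma lorentz_mellin_pos: "0 < p \<Longrightarrow> p < 2 \<Longrightarrow> 0 < lorentz_mellin p"
  unfolding lorentz_mellin_def
  by (rule integral_Ioi_pos[OF integrable_lorentz_mellin]) (auto intro!: divide_pos_pos add_nonneg_pos)

lemma integral_Ioi_0_lorentz_scaled:
  fixes p x :: real
  assumes p: "0 < p" "p < 2" and x: "x > 0"
  shows "integrable lborel (\<lambda>s. indicator {0<..} s * (s powr (p - 1) * (x / (s\<^sup>2 + x\<^sup>2))))"
    and "(\<integral>s. indicator {0<..} s * (s powr (p - 1) * (x / (s\<^sup>2 + x\<^sup>2))) \<partial>lborel) = lorentz_mellin p * x powr (p - 1)"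
proof -
  define f where "f u = u powr (p - 1) / (u\<^sup>2 + 1)" for u :: real
  have x': "1 / x > 0" using x by simp
  have f_int: "integrable lborel (\<lambda>u. indicator {0<..} u * f u)"
    unfolding f_def by (rule integrable_lorentz_mellin[OF p])
  have xpow: "x powr (2 - p) = x / x powr (p - 1)"
    using powr_diff[of x 1 "p - 1"] x by simp
  have scaled: "indicator {0<..} s * f (1 / x * s)
      = x powr (2 - p) * (indicator {0<..} s * (s powr (p - 1) * (x / (s\<^sup>2 + x\<^sup>2))))" for s
  proof (cases "s > 0")
    case True
    have "f (1 / x * s) = s powr (p - 1) / x powr (p - 1) / ((s / x)\<^sup>2 + 1)"
      using True x by (simp add: f_def powr_divide)
    also have "\<dots> = x powr (2 - p) * (s powr (p - 1) * (x / (s\<^sup>2 + x\<^sup>2)))"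
      using True x by (simp add: xpow field_simps power2_eq_square add_pos_pos)
    finally show ?thesis using True by simp
  qed simp
  show "integrable lborel (\<lambda>s. indicator {0<..} s * (s powr (p - 1) * (x / (s\<^sup>2 + x\<^sup>2))))"
    using integral_Ioi_0_scale(1)[OF x' f_int] x unfolding scaled integrable_mult_left_iff by simp
  have K: "lorentz_mellin p = (\<integral>u. indicator {0<..} u * f u \<partial>lborel)"
    by (simp add: lorentz_mellin_def f_def)
  have "(\<integral>s. indicator {0<..} s * f (1 / x * s) \<partial>lborel) = lorentz_mellin p * x"
    unfolding K using integral_Ioi_0_scale(2)[OF x' f_int] x by simp
  then have "x powr (2 - p) * (\<integral>s. indicator {0<..} s * (s powr (p - 1) * (x / (s\<^sup>2 + x\<^sup>2))) \<partial>lborel)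
      = lorentz_mellin p * x"
    by (simp only: scaled integral_mult_right_zero)
  then show "(\<integral>s. indicator {0<..} s * (s powr (p - 1) * (x / (s\<^sup>2 + x\<^sup>2))) \<partial>lborel) = lorentz_mellin p * x powr (p - 1)"
    using x by (simp add: xpow field_simps)
qed

lemma integrable_fp_integrand:
  fixes p :: real
  assumes p: "0 < p" "p \<le> 2"
  shows "integrable lborel (\<lambda>x. indicator {0<..} x * (x powr (p - 1) * exp (- x\<^sup>2) * sin (w * x)))"
proof (rule integrable_Ioi_0_powr_bound)
  have "integrable lborel (\<lambda>x::real. indicator {0..} x *\<^sub>R (exp (- x\<^sup>2) * x))"
    using gaussian_moment_1 by (rule integrable.intros)
  then show "integrable lborel (\<lambda>x::real. indicator {1..} x * (exp (- x\<^sup>2) * x))"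
    by (rule Bochner_Integration.integrable_bound) (auto simp: indicator_def)
  show "\<bar>x powr (p - 1) * exp (- x\<^sup>2) * sin (w * x)\<bar> \<le> x powr (p - 1)" if "0 < x" for x :: real
  proof -
    have "x powr (p - 1) * (exp (- x\<^sup>2) * \<bar>sin (w * x)\<bar>) \<le> x powr (p - 1)"
      by (rule mult_left_le) (auto intro: mult_le_one)
    then show ?thesis by (simp add: abs_mult mult.assoc)
  qed
  show "\<bar>x powr (p - 1) * exp (- x\<^sup>2) * sin (w * x)\<bar> \<le> exp (- x\<^sup>2) * x" if "1 \<le> x" for x :: real
  proof -
    have "x powr (p - 1) * \<bar>sin (w * x)\<bar> \<le> x powr (p - 1)"
      by (rule mult_left_le) auto
    also have "\<dots> \<le> x powr 1"
      using that p by (intro powr_mono) auto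
    finally have "exp (- x\<^sup>2) * (x powr (p - 1) * \<bar>sin (w * x)\<bar>) \<le> exp (- x\<^sup>2) * x"
      using that by (intro mult_left_mono) auto
    moreover have "\<bar>x powr (p - 1) * exp (- x\<^sup>2) * sin (w * x)\<bar> = exp (- x\<^sup>2) * (x powr (p - 1) * \<bar>sin (w * x)\<bar>)"
      by (simp add: abs_mult)
    ultimately show ?thesis by simp
  qed
qed (use p in auto)

lemma fp_eq_lborel_integral:
  assumes "0 < p" "p \<le> 2"
  shows "fp p w = (\<integral>x. indicator {0<..} x * (x powr (p - 1) * exp (- x\<^sup>2) * sin (w * x)) \<partial>lborel)"
proof -
  have "set_integrable lborel {0<..} (\<lambda>x. x powr (p - 1) * exp (- x\<^sup>2) * sin (w * x))"
    using integrable_fp_integrand[OF assms, of w] by (simp add: set_integrable_def)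
  from set_borel_integral_eq_integral(2)[OF this] show ?thesis
    by (simp add: fp_def set_lebesgue_integral_def)
qed

definition folded_pv :: "real \<Rightarrow> real \<Rightarrow> real" where
  "folded_pv p w = (\<integral>t. indicator {0<..} t * (t powr (- p) * gauss_diff w t) \<partial>lborel)"

lemma integrable_folded_pv:
  assumes p: "0 < p" "p < 2"
  shows "integrable lborel (\<lambda>t. indicator {0<..} t * (t powr (- p) * gauss_diff w t))"
proof (rule integrable_Ioi_0_powr_bound)
  have "(\<lambda>t::real. exp (- ((- w - t)\<^sup>2) / 4)) = (\<lambda>t. exp (- ((w + t)\<^sup>2) / 4))"
    by (rule ext) (simp add: power2_eq_square algebra_simps)
  then have gauss_sum: "integrable lborel (\<lambda>t::real. exp (- ((w - t)\<^sup>2) / 4) + exp (- ((w + t)\<^sup>2) / 4))"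
    using integrable_gaussian_shift[of w] integrable_gaussian_shift[of "- w"] by simp
  show "integrable lborel (\<lambda>t::real. indicator {1..} t * (exp (- ((w - t)\<^sup>2) / 4) + exp (- ((w + t)\<^sup>2) / 4)))"
    using integrable_mult_indicator[OF _ gauss_sum, of "{1..}"] by simp
  show "\<bar>t powr (- p) * gauss_diff w t\<bar> \<le> t powr (1 - p)" if "0 < t" for t :: real
  proof -
    have "t powr (- p) * \<bar>gauss_diff w t\<bar> \<le> t powr (- p) * t"
      using abs_gauss_diff_le[of w t] that by (intro mult_left_mono) auto
    also have "\<dots> = t powr (1 - p)"
      using that by (simp add: powr_diff powr_minus field_simps)
    finally show ?thesis by (simp add: abs_mult)
  qed
  show "\<bar>t powr (- p) * gauss_diff w t\<bar> \<le> exp (- ((w - t)\<^sup>2) / 4) + exp (- ((w + t)\<^sup>2) / 4)"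
    if "1 \<le> t" for t :: real
  proof -
    have "t powr (- p) \<le> t powr 0" using that p by (intro powr_mono) auto
    then have "t powr (- p) * \<bar>gauss_diff w t\<bar> \<le> 1 * (exp (- ((w - t)\<^sup>2) / 4) + exp (- ((w + t)\<^sup>2) / 4))"
      using that abs_gauss_diff_le_sum[of w t] by (intro mult_mono) auto
    then show ?thesis by (simp add: abs_mult)
  qed
qed (use p in auto)

lemma folded_pv_minus: "folded_pv p (- w) = - folded_pv p w"
  by (simp add: folded_pv_def gauss_diff_minus)

lemma folded_pv_nonzero:
  assumes p: "0 < p" "p < 2" and w: "w \<noteq> 0"
  shows "folded_pv p w \<noteq> 0"
proof -
  have pos: "0 < folded_pv p v" if "0 < v" for v
    unfolding folded_pv_def
    by (rule integral_Ioi_pos[OF integrable_folded_pv[OF p]]) (use that gauss_diff_pos in auto)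
  show ?thesis
    using pos[of w] pos[of "- w"] w by (cases "w > 0") (auto simp: folded_pv_minus)
qed

lemma Gamma_mul_folded_pv:
  fixes p w :: real
  assumes p: "0 < p" "p < 2"
  shows "Gamma p * folded_pv p w =
    (\<integral>s. indicator {0<..} s * (s powr (p - 1) *
       (\<integral>t. indicator {0<..} t * exp (- (s * t)) * gauss_diff w t \<partial>lborel)) \<partial>lborel)"
proof -
  define k where "k = (\<lambda>t s. indicator {0<..} t * (indicator {0<..} s * (s powr (p - 1) * exp (- (s * t)))))"
  have k_integral: "(\<integral>s. k t s \<partial>lborel) = indicator {0<..} t * (Gamma p * t powr (- p))" for t
    by (cases "t > 0") (simp_all add: k_def integral_Ioi_0_Gamma_scaled(2)[OF p(1)])
  have "Gamma p * folded_pv p w = (\<integral>t. Gamma p * (indicator {0<..} t * (t powr (- p) * gauss_diff w t)) \<partial>lborel)"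
    by (simp add: folded_pv_def)
  also have "\<dots> = (\<integral>t. gauss_diff w t * (\<integral>s. k t s \<partial>lborel) \<partial>lborel)"
    by (rule Bochner_Integration.integral_cong[OF refl]) (simp add: k_integral)
  also have "\<dots> = (\<integral>s. (\<integral>t. gauss_diff w t * k t s \<partial>lborel) \<partial>lborel)"
  proof (rule integral_swap_nonneg_kernel)
    show "(\<lambda>(t, s). gauss_diff w t * k t s) \<in> borel_measurable (lborel \<Otimes>\<^sub>M lborel)"
      unfolding k_def by measurable
    show "integrable lborel (k t)" for t
      by (cases "t > 0") (simp_all add: k_def integral_Ioi_0_Gamma_scaled(1)[OF p(1)])
    show "0 \<le> k t s" for t s
      by (simp add: k_def)
    show "integrable lborel (\<lambda>t. gauss_diff w t * (\<integral>s. k t s \<partial>lborel))"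
      using integrable_folded_pv[OF p, of w] by (simp add: k_integral ac_simps)
  qed
  also have "\<dots> = (\<integral>s. indicator {0<..} s * (s powr (p - 1) *
       (\<integral>t. indicator {0<..} t * exp (- (s * t)) * gauss_diff w t \<partial>lborel)) \<partial>lborel)"
  proof (rule Bochner_Integration.integral_cong[OF refl])
    fix s :: real
    have "(\<integral>t. gauss_diff w t * k t s \<partial>lborel) = (\<integral>t. (indicator {0<..} s * s powr (p - 1)) *
        (indicator {0<..} t * exp (- (s * t)) * gauss_diff w t) \<partial>lborel)"
      by (rule Bochner_Integration.integral_cong[OF refl]) (simp add: k_def ac_simps)
    then show "(\<integral>t. gauss_diff w t * k t s \<partial>lborel) = indicator {0<..} s * (s powr (p - 1) *
        (\<integral>t. indicator {0<..} t * exp (- (s * t)) * gauss_diff w t \<partial>lborel))"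
      by simp
  qed
  finally show ?thesis .
qed

lemma laplace_gauss_diff:
  fixes s w :: real
  assumes s: "s > 0"
  shows "sqrt pi / 4 * (\<integral>t. indicator {0<..} t * exp (- (s * t)) * gauss_diff w t \<partial>lborel) =
    (\<integral>x. indicator {0<..} x * (exp (- x\<^sup>2) * sin (w * x)) * (x / (s\<^sup>2 + x\<^sup>2)) \<partial>lborel)"
proof -
  define F where "F = (\<lambda>t x. indicator {0<..} t * exp (- (s * t)) *
      (indicator {0<..} x * (exp (- x\<^sup>2) * sin (w * x) * sin (t * x))))"
  have inner: "(\<integral>x. F t x \<partial>lborel) = sqrt pi / 4 * (indicator {0<..} t * exp (- (s * t)) * gauss_diff w t)" for t
    unfolding F_def integral_mult_right_zero integral_Ioi_0_gaussian_sin_sin by simp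
  have "sqrt pi / 4 * (\<integral>t. indicator {0<..} t * exp (- (s * t)) * gauss_diff w t \<partial>lborel)
      = (\<integral>t. (\<integral>x. F t x \<partial>lborel) \<partial>lborel)"
    by (simp only: inner integral_mult_right_zero)
  also have "\<dots> = (\<integral>x. (\<integral>t. F t x \<partial>lborel) \<partial>lborel)"
  proof (rule integral_swap_product_bound)
    show "(\<lambda>(t, x). F t x) \<in> borel_measurable (lborel \<Otimes>\<^sub>M lborel)"
      unfolding F_def by measurable
    show "\<bar>F t x\<bar> \<le> indicator {0..} t * exp (- (s * t)) * exp (- x\<^sup>2)" for t x
      unfolding F_def by (auto simp: indicator_def abs_mult intro!: mult_left_le mult_le_one)
  qed (use integrable_exp_neg_linear[OF s] integrable_lborel_gaussian in auto)
  also have "\<dots> = (\<integral>x. indicator {0<..} x * (exp (- x\<^sup>2) * sin (w * x)) * (x / (s\<^sup>2 + x\<^sup>2)) \<partial>lborel)"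
  proof (rule Bochner_Integration.integral_cong[OF refl])
    fix x :: real
    have "(\<integral>t. F t x \<partial>lborel) = (\<integral>t. (indicator {0<..} x * (exp (- x\<^sup>2) * sin (w * x))) *
        (indicator {0<..} t * (exp (- (s * t)) * sin (x * t))) \<partial>lborel)"
      by (rule Bochner_Integration.integral_cong[OF refl]) (simp add: F_def ac_simps)
    then show "(\<integral>t. F t x \<partial>lborel) = indicator {0<..} x * (exp (- x\<^sup>2) * sin (w * x)) * (x / (s\<^sup>2 + x\<^sup>2))"
      by (simp add: integral_Ioi_0_exp_sin[OF s])
  qed
  finally show ?thesis .
qed

lemma lorentz_mellin_mul_fp:
  fixes p w :: real
  assumes p: "0 < p" "p < 2"
  shows "(\<integral>s. indicator {0<..} s * (s powr (p - 1) *
       (\<integral>x. indicator {0<..} x * (exp (- x\<^sup>2) * sin (w * x)) * (x / (s\<^sup>2 + x\<^sup>2)) \<partial>lborel)) \<partial>lborel)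
    = lorentz_mellin p * fp p w"
proof -
  define k where "k = (\<lambda>x s. indicator {0<..} x * (indicator {0<..} s * (s powr (p - 1) * (x / (s\<^sup>2 + x\<^sup>2)))))"
  have k_integral: "(\<integral>s. k x s \<partial>lborel) = indicator {0<..} x * (lorentz_mellin p * x powr (p - 1))" for x
    using integral_Ioi_0_lorentz_scaled(2)[OF p, of x] by (cases "x > 0") (simp_all add: k_def)
  have "lorentz_mellin p * fp p w
      = (\<integral>x. lorentz_mellin p * (indicator {0<..} x * (x powr (p - 1) * exp (- x\<^sup>2) * sin (w * x))) \<partial>lborel)"
    using p by (simp add: fp_eq_lborel_integral)
  also have "\<dots> = (\<integral>x. exp (- x\<^sup>2) * sin (w * x) * (\<integral>s. k x s \<partial>lborel) \<partial>lborel)"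
    by (rule Bochner_Integration.integral_cong[OF refl]) (simp add: k_integral ac_simps)
  also have "\<dots> = (\<integral>s. (\<integral>x. exp (- x\<^sup>2) * sin (w * x) * k x s \<partial>lborel) \<partial>lborel)"
  proof (rule integral_swap_nonneg_kernel)
    show "(\<lambda>(x, s). exp (- x\<^sup>2) * sin (w * x) * k x s) \<in> borel_measurable (lborel \<Otimes>\<^sub>M lborel)"
      unfolding k_def by measurable
    show "integrable lborel (k x)" for x
      using integral_Ioi_0_lorentz_scaled(1)[OF p, of x] by (cases "x > 0") (simp_all add: k_def)
    show "0 \<le> k x s" for x s
      unfolding k_def by (auto simp: indicator_def intro!: divide_nonneg_nonneg)
    show "integrable lborel (\<lambda>x. exp (- x\<^sup>2) * sin (w * x) * (\<integral>s. k x s \<partial>lborel))"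
      using integrable_fp_integrand[of p w] p by (simp add: k_integral ac_simps)
  qed
  also have "\<dots> = (\<integral>s. indicator {0<..} s * (s powr (p - 1) *
       (\<integral>x. indicator {0<..} x * (exp (- x\<^sup>2) * sin (w * x)) * (x / (s\<^sup>2 + x\<^sup>2)) \<partial>lborel)) \<partial>lborel)"
  proof (rule Bochner_Integration.integral_cong[OF refl])
    fix s :: real
    have "(\<integral>x. exp (- x\<^sup>2) * sin (w * x) * k x s \<partial>lborel) = (\<integral>x. (indicator {0<..} s * s powr (p - 1)) *
        (indicator {0<..} x * (exp (- x\<^sup>2) * sin (w * x)) * (x / (s\<^sup>2 + x\<^sup>2))) \<partial>lborel)"
      by (rule Bochner_Integration.integral_cong[OF refl]) (simp add: k_def ac_simps)
    then show "(\<integral>x. exp (- x\<^sup>2) * sin (w * x) * k x s \<partial>lborel) = indicator {0<..} s * (s powr (p - 1) *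
        (\<integral>x. indicator {0<..} x * (exp (- x\<^sup>2) * sin (w * x)) * (x / (s\<^sup>2 + x\<^sup>2)) \<partial>lborel))"
      by (simp only: integral_mult_right_zero mult.assoc)
  qed
  finally show ?thesis ..
qed

lemma fp_eq_folded_pv:
  fixes p w :: real
  assumes p: "0 < p" "p < 2"
  shows "lorentz_mellin p * fp p w = sqrt pi * Gamma p / 4 * folded_pv p w"
proof -
  have "sqrt pi * Gamma p / 4 * folded_pv p w
      = (\<integral>s. indicator {0<..} s * (s powr (p - 1) *
          (sqrt pi / 4 * (\<integral>t. indicator {0<..} t * exp (- (s * t)) * gauss_diff w t \<partial>lborel))) \<partial>lborel)"
    using Gamma_mul_folded_pv[OF p, of w] by (simp add: ac_simps)
  also have "\<dots> = (\<integral>s. indicator {0<..} s * (s powr (p - 1) *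
       (\<integral>x. indicator {0<..} x * (exp (- x\<^sup>2) * sin (w * x)) * (x / (s\<^sup>2 + x\<^sup>2)) \<partial>lborel)) \<partial>lborel)"
  proof (rule Bochner_Integration.integral_cong[OF refl])
    fix s :: real
    show "indicator {0<..} s * (s powr (p - 1) *
          (sqrt pi / 4 * (\<integral>t. indicator {0<..} t * exp (- (s * t)) * gauss_diff w t \<partial>lborel)))
        = indicator {0<..} s * (s powr (p - 1) *
          (\<integral>x. indicator {0<..} x * (exp (- x\<^sup>2) * sin (w * x)) * (x / (s\<^sup>2 + x\<^sup>2)) \<partial>lborel))"
      by (cases "s > 0") (simp_all only: laplace_gauss_diff indicator_simps greaterThan_iff, simp_all)
  qed
  also have "\<dots> = lorentz_mellin p * fp p w"
    by (rule lorentz_mellin_mul_fp[OF p])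
  finally show ?thesis ..
qed

lemma set_integrable_pv_integrand:
  fixes p w e :: real
  assumes p: "0 \<le> p" and e: "0 < e"
  shows "set_integrable lborel {t. e < \<bar>t\<bar>} (\<lambda>t. sgn t * \<bar>t\<bar> powr (- p) * exp (- ((w - t)\<^sup>2) / 4))"
  unfolding set_integrable_def
proof (rule Bochner_Integration.integrable_bound)
  show "integrable lborel (\<lambda>t. e powr (- p) * exp (- ((w - t)\<^sup>2) / 4))"
    using integrable_gaussian_shift[of w] by simp
  show "AE t in lborel. norm (indicator {t. e < \<bar>t\<bar>} t *\<^sub>R (sgn t * \<bar>t\<bar> powr (- p) * exp (- ((w - t)\<^sup>2) / 4)))
      \<le> norm (e powr (- p) * exp (- ((w - t)\<^sup>2) / 4))"
  proof (intro always_eventually allI)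
    fix t :: real
    show "norm (indicator {t. e < \<bar>t\<bar>} t *\<^sub>R (sgn t * \<bar>t\<bar> powr (- p) * exp (- ((w - t)\<^sup>2) / 4)))
      \<le> norm (e powr (- p) * exp (- ((w - t)\<^sup>2) / 4))"
    proof (cases "e < \<bar>t\<bar>")
      case True
      have "\<bar>sgn t\<bar> * \<bar>t\<bar> powr (- p) \<le> 1 * e powr (- p)"
        using True e p by (intro mult_mono powr_mono2') (auto simp: abs_sgn_eq)
      then show ?thesis using True by (simp add: abs_mult)
    qed simp
  qed
qed simp

lemma integral_pv_integrand_fold:
  fixes p w e :: real
  assumes p: "0 \<le> p" and e: "0 < e"
  shows "integral {t. e < \<bar>t\<bar>} (\<lambda>t. sgn t * \<bar>t\<bar> powr (- p) * exp (- ((w - t)\<^sup>2) / 4))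
    = (\<integral>t. indicator {e<..} t * (t powr (- p) * gauss_diff w t) \<partial>lborel)"
proof -
  define \<phi> where "\<phi> = (\<lambda>t::real. sgn t * \<bar>t\<bar> powr (- p) * exp (- ((w - t)\<^sup>2) / 4))"
  have \<phi>_int: "set_integrable lborel {t. e < \<bar>t\<bar>} \<phi>"
    unfolding \<phi>_def by (rule set_integrable_pv_integrand[OF p e])
  have "integral {t. e < \<bar>t\<bar>} \<phi> = (\<integral>t. indicator {t. e < \<bar>t\<bar>} t * \<phi> t \<partial>lborel)"
    using set_borel_integral_eq_integral(2)[OF \<phi>_int] by (simp add: set_lebesgue_integral_def)
  also have "\<dots> = (\<integral>t. indicator {0<..} t *
      (indicator {t. e < \<bar>t\<bar>} t * \<phi> t + indicator {t. e < \<bar>t\<bar>} (- t) * \<phi> (- t)) \<partial>lborel)"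
    by (rule integral_lborel_fold) (use \<phi>_int in \<open>simp add: set_integrable_def\<close>)
  also have "\<dots> = (\<integral>t. indicator {e<..} t * (t powr (- p) * gauss_diff w t) \<partial>lborel)"
    using e by (intro Bochner_Integration.integral_cong)
      (auto simp: indicator_def \<phi>_def gauss_diff_def power2_commute algebra_simps)
  finally show ?thesis unfolding \<phi>_def .
qed

lemma has_pv_integral_folded_pv:
  fixes p w :: real
  assumes p: "0 < p" "p < 2"
  shows "has_pv_integral (\<lambda>t. sgn t * \<bar>t\<bar> powr (- p) * exp (- ((w - t)\<^sup>2) / 4)) (folded_pv p w)"
proof -
  have "((\<lambda>e. \<integral>t. indicator {e<..} t * (t powr (- p) * gauss_diff w t) \<partial>lborel) \<longlongrightarrow> folded_pv p w)
      (at_right 0)"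
    unfolding folded_pv_def by (rule tendsto_integral_Ioi_at_right_0[OF integrable_folded_pv[OF p]])
  moreover have "\<forall>\<^sub>F e in at_right 0. (\<integral>t. indicator {e<..} t * (t powr (- p) * gauss_diff w t) \<partial>lborel)
      = integral {t. e < \<bar>t\<bar>} (\<lambda>t. sgn t * \<bar>t\<bar> powr (- p) * exp (- ((w - t)\<^sup>2) / 4))"
    by (rule eventually_mono[OF eventually_at_right_less], rule integral_pv_integrand_fold[symmetric])
       (use p in auto)
  ultimately show ?thesis
    unfolding has_pv_integral_def
    using set_integrable_pv_integrand[of p] set_borel_integral_eq_integral(1) p
    by (blast intro: Lim_transform_eventually less_imp_le)
qed

lemma integral_Ioi_0_gaussian_cos:
  fixes w :: real
  shows "(\<integral>x. indicator {0<..} x * (exp (- x\<^sup>2) * cos (w * x)) \<partial>lborel) = sqrt pi / 2 * exp (- (w\<^sup>2) / 4)"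
  using integral_Ioi_0_even[OF integrable_gaussian_cos, of w] integral_gaussian_cos[of w] by simp

lemma integral_Ioi_0_x_gaussian_sin:
  fixes w :: real
  shows "(\<integral>x. indicator {0<..} x * (x * exp (- x\<^sup>2) * sin (w * x)) \<partial>lborel)
     = w / 2 * (\<integral>x. indicator {0<..} x * (exp (- x\<^sup>2) * cos (w * x)) \<partial>lborel)"
proof -
  define f where "f x = x * exp (- x\<^sup>2) * sin (w * x) - w / 2 * (exp (- x\<^sup>2) * cos (w * x))" for x :: real
  define F where "F x = - (exp (- x\<^sup>2) * sin (w * x)) / 2" for x :: real
  have sin_int: "integrable lborel (\<lambda>x. indicator {0<..} x * (x * exp (- x\<^sup>2) * sin (w * x)))"
    using integrable_fp_integrand[of 2 w]
    by (rule Bochner_Integration.integrable_cong[THEN iffD1, rotated 2]) (auto simp: indicator_def)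
  have cos_int: "integrable lborel (\<lambda>x. indicator {0<..} x * (exp (- x\<^sup>2) * cos (w * x)))"
    using integrable_mult_indicator[OF _ integrable_gaussian_cos, of "{0<..}"] by simp
  have "(\<integral>x. indicator {0<..} x * f x \<partial>lborel) = 0 - F 0"
  proof (rule integral_Ioi_FTC)
    show "(F has_real_derivative f x) (at x)" for x
      unfolding F_def f_def by (auto intro!: derivative_eq_intros simp: field_simps)
    show "integrable lborel (\<lambda>x. indicator {0<..} x * f x)"
      using Bochner_Integration.integrable_diff[OF sin_int integrable_mult_right[OF cos_int, of "w / 2"]]
      by (simp add: f_def algebra_simps)
    show "(F \<longlongrightarrow> 0) at_top"
    proof (rule Lim_null_comparison)
      show "\<forall>\<^sub>F x in at_top. norm (F x) \<le> exp (- x\<^sup>2) / 2"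
        by (intro always_eventually allI) (auto simp: F_def abs_mult intro!: mult_left_le)
      show "((\<lambda>x::real. exp (- x\<^sup>2) / 2) \<longlongrightarrow> 0) at_top" by real_asymp
    qed
  qed (simp add: f_def)
  then show ?thesis
    using sin_int cos_int by (simp add: f_def F_def algebra_simps)
qed

lemma fp_2: "fp 2 w = sqrt pi / 4 * w * exp (- (w\<^sup>2) / 4)"
proof -
  have "fp 2 w = (\<integral>x. indicator {0<..} x * (x * exp (- x\<^sup>2) * sin (w * x)) \<partial>lborel)"
    unfolding fp_eq_lborel_integral[of 2 w, simplified]
    by (rule Bochner_Integration.integral_cong[OF refl]) (auto simp: indicator_def)
  then show ?thesis
    by (simp add: integral_Ioi_0_x_gaussian_sin integral_Ioi_0_gaussian_cos)
qed

theorem lemma17: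
  shows "(\<forall>p::real. 0 < p \<and> p < 2 \<longrightarrow>
            (\<exists>c::real. c \<noteq> 0 \<and>
               (\<forall>w::real. \<exists>L. has_pv_integral
                   (\<lambda>t. sgn t * \<bar>t\<bar> powr (- p) * exp (- ((w - t)\<^sup>2) / 4)) L
                 \<and> fp p w = c * L)))
       \<and> (\<forall>p::real. \<forall>w::real. 0 < p \<and> p \<le> 2 \<and> fp p w = 0 \<longrightarrow> w = 0)"
proof (intro conjI allI impI)
  fix p :: real
  assume "0 < p \<and> p < 2"
  then have p: "0 < p" "p < 2" by auto
  define c where "c = sqrt pi * Gamma p / (4 * lorentz_mellin p)"
  have "c \<noteq> 0"
    using Gamma_real_pos[OF p(1)] lorentz_mellin_pos[OF p] by (simp add: c_def)
  moreover have "fp p w = c * folded_pv p w" for w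
    using fp_eq_folded_pv[OF p, of w] lorentz_mellin_pos[OF p] by (simp add: c_def field_simps)
  ultimately show "\<exists>c. c \<noteq> 0 \<and> (\<forall>w. \<exists>L. has_pv_integral
      (\<lambda>t. sgn t * \<bar>t\<bar> powr (- p) * exp (- ((w - t)\<^sup>2) / 4)) L \<and> fp p w = c * L)"
    using has_pv_integral_folded_pv[OF p] by blast
next
  fix p w :: real
  assume a: "0 < p \<and> p \<le> 2 \<and> fp p w = 0"
  show "w = 0"
  proof (cases "p = 2")
    case True
    then show ?thesis using a fp_2[of w] by simp
  next
    case False
    then have p: "0 < p" "p < 2" using a by auto
    then have "sqrt pi * Gamma p / 4 * folded_pv p w = 0"
      using fp_eq_folded_pv[OF p, of w] a by simp
    then show ?thesis
      using folded_pv_nonzero[OF p] Gamma_real_pos[OF p(1)] by auto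
  qed
qed

end
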